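(* Under the hypotheses of Theorem 1 with $\mathcal{G}$ being $(f+1,f+1)$-robust (synchronous network, DP-MSR with parameter $f$, $f$-total malicious model, $1+\frac{T^2}{2}\le\alpha T\le 2-\frac{T^2}{2}$), the normal agents reach resilient consensus with an exponential convergence rate: letting $V(k)=\max_{i\notin\mathcal{M}}\max\{\hat{x}_i[k],\hat{x}_i[k-1]\}-\min_{i\notin\mathcal{M}}\min\{\hat{x}_i[k],\hat{x}_i[k-1]\}$ for $k\ge 1$, there exist constants $C>0$ and $\rho\in(0,1)$, independent of the malicious inputs, such that $V(k)\le C\rho^{k}V(1)$ for all $k\ge 1$; in particular the normal agents' positions converge to a common limit exponentially fast.
   Context: Graphs. A digraph $\mathcal{G}=(\mathcal{V},\mathcal{E})$ has node set $\mathcal{V}=\{1,\dots,n\}$, $n>1$, and edge set $\mathcal{E}\subseteq\mathcal{V}\times\mathcal{V}$ without self-loops; $(j,i)\in\mathcal{E}$ means node $i$ receives information from node $j$. The neighbor set of $i$ is $\mathcal{N}_i=\{j:(j,i)\in\mathcal{E}\}$. For $\mathcal{S}'\subseteq\mathcal{V}$ and integer $r$, let $\mathcal{X}^r_{\mathcal{S}'}$ be the set of nodes in $\mathcal{S}'$ having at least $r$ in-neighbors outside $\mathcal{S}'$. The digraph is $(r,s)$-robust if for every pair of nonempty disjoint subsets $\mathcal{S}_1,\mathcal{S}_2\subset\mathcal{V}$ at least one holds: (1) $\mathcal{X}^r_{\mathcal{S}_1}=\mathcal{S}_1$; (2) $\mathcal{X}^r_{\mathcal{S}_2}=\mathcal{S}_2$;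 (3) $|\mathcal{X}^r_{\mathcal{S}_1}|+|\mathcal{X}^r_{\mathcal{S}_2}|\ge s$. Weights. Fix $\gamma>0$ and weights $a_{ij}\in[\gamma,1)$ for $(j,i)\in\mathcal{E}$ with $\sum_{j\in\mathcal{N}_i}a_{ij}\le 1$ for every $i$. Agents. Each agent $i$ has position $\hat{x}_i[k]\in\mathbb{R}$ and velocity $v_i[k]\in\mathbb{R}$ with dynamics $\hat{x}_i[k+1]=\hat{x}_i[k]+Tv_i[k]+\frac{T^2}{2}u_i[k]$, $v_i[k+1]=v_i[k]+Tu_i[k]$. Malicious agents $i\in\mathcal{M}$ use arbitrary inputs; normal agents use $u_i[k]=-\sum_{j\in\mathcal{N}_i}a_{ij}[k](\hat{x}_i[k]-\hat{x}_j[k])-\alpha v_i[k]$ with $a_{ij}[k]$ from the DP-MSR algorithm. DP-MSR algorithm (parameter $f$), synchronous: at each time $k$, each normal agent $i$ considers the relative positions $\hat{x}_j[k]-\hat{x}_i[k]$, $j\in\mathcal{N}_i$. If fewer than $f$ neighbors have relative value $\ge 0$, it ignores all of those; otherwise it ignores $f$ neighbors with the largest relative values. Similarly for values $\le 0$ and the $f$ smallest. Then $a_{ij}[k]=0$ for ignored neighbors and $a_{ij}[k]=a_{ij}$ otherwise. $f$-total malicious model: $|\mathcal{M}|\le f$. Resilient consensus: for every admissible $\mathcal{M}$, all initial conditions and all malicious inputs, the normal agents' positions stay in a bounded interval determined by the normal agents' initial data and converge to a common value in it, and their velocities converge to $0$. *)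

theory Defs
  imports Complex_Main
begin

text \<open>Nodes are 1..n; an edge (j,i) in E means node i receives information from node j.\<close>

definition nbrs :: "(nat \<times> nat) set \<Rightarrow> nat \<Rightarrow> nat set" where
  "nbrs E i = {j. (j, i) \<in> E}"

definition digraph :: "nat \<Rightarrow> (nat \<times> nat) set \<Rightarrow> bool" where
  "digraph n E \<longleftrightarrow> 1 < n \<and> E \<subseteq> {1..n} \<times> {1..n} \<and> (\<forall>i. (i, i) \<notin> E)"

definition reach_set :: "(nat \<times> nat) set \<Rightarrow> nat \<Rightarrow> nat set \<Rightarrow> nat set" where
  "reach_set E r S = {i \<in> S. r \<le> card (nbrs E i - S)}"

definition robust :: "nat \<Rightarrow> (nat \<times> nat) set \<Rightarrow> nat \<Rightarrow> nat \<Rightarrow> bool" where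
  "robust n E r s \<longleftrightarrow>
     (\<forall>S1 S2. S1 \<subseteq> {1..n} \<longrightarrow> S2 \<subseteq> {1..n} \<longrightarrow> S1 \<noteq> {} \<longrightarrow> S2 \<noteq> {} \<longrightarrow> S1 \<inter> S2 = {} \<longrightarrow>
        reach_set E r S1 = S1 \<or> reach_set E r S2 = S2 \<or>
        s \<le> card (reach_set E r S1) + card (reach_set E r S2))"

definition admissible_weights ::
  "nat \<Rightarrow> (nat \<times> nat) set \<Rightarrow> real \<Rightarrow> (nat \<Rightarrow> nat \<Rightarrow> real) \<Rightarrow> bool" where
  "admissible_weights n E \<gamma> a \<longleftrightarrow> 0 < \<gamma> \<and>
     (\<forall>i j. (j, i) \<in> E \<longrightarrow> \<gamma> \<le> a i j \<and> a i j < 1) \<and>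
     (\<forall>i \<in> {1..n}. (\<Sum>j \<in> nbrs E i. a i j) \<le> 1)"

text \<open>Ties are broken arbitrarily (any valid choice is allowed).\<close>
definition upper_removed :: "nat \<Rightarrow> nat set \<Rightarrow> (nat \<Rightarrow> real) \<Rightarrow> nat set \<Rightarrow> bool" where
  "upper_removed f Nb r U \<longleftrightarrow>
     (if card {j \<in> Nb. 0 \<le> r j} < f then U = {j \<in> Nb. 0 \<le> r j}
      else U \<subseteq> {j \<in> Nb. 0 \<le> r j} \<and> card U = f \<and> (\<forall>j \<in> U. \<forall>l \<in> Nb - U. r l \<le> r j))"

definition lower_removed :: "nat \<Rightarrow> nat set \<Rightarrow> (nat \<Rightarrow> real) \<Rightarrow> nat set \<Rightarrow> bool" where
  "lower_removed f Nb r L \<longleftrightarrow>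
     (if card {j \<in> Nb. r j \<le> 0} < f then L = {j \<in> Nb. r j \<le> 0}
      else L \<subseteq> {j \<in> Nb. r j \<le> 0} \<and> card L = f \<and> (\<forall>j \<in> L. \<forall>l \<in> Nb - L. r j \<le> r l))"

text \<open>A trajectory of the network: x k i, v k i, u k i are position, velocity and input of
  agent i at time k.\<close>
definition dpmsr_traj ::
  "nat \<Rightarrow> (nat \<times> nat) set \<Rightarrow> (nat \<Rightarrow> nat \<Rightarrow> real) \<Rightarrow> nat \<Rightarrow> real \<Rightarrow> real \<Rightarrow> nat set \<Rightarrow>
   (nat \<Rightarrow> nat \<Rightarrow> real) \<Rightarrow> (nat \<Rightarrow> nat \<Rightarrow> real) \<Rightarrow> (nat \<Rightarrow> nat \<Rightarrow> real) \<Rightarrow> bool" where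
  "dpmsr_traj n E a f T \<alpha> M x v u \<longleftrightarrow>
     (\<forall>k. \<forall>i \<in> {1..n}.
        x (Suc k) i = x k i + T * v k i + T\<^sup>2 / 2 * u k i \<and>
        v (Suc k) i = v k i + T * u k i) \<and>
     (\<forall>k. \<forall>i \<in> {1..n} - M. \<exists>U L.
        upper_removed f (nbrs E i) (\<lambda>j. x k j - x k i) U \<and>
        lower_removed f (nbrs E i) (\<lambda>j. x k j - x k i) L \<and>
        u k i = - (\<Sum>j \<in> nbrs E i - (U \<union> L). a i j * (x k i - x k j)) - \<alpha> * v k i)"

text \<open>V(k) for k \<ge> 1, over the set Nn of normal agents.\<close>
definition Vfun :: "nat set \<Rightarrow> (nat \<Rightarrow> nat \<Rightarrow> real) \<Rightarrow> nat \<Rightarrow> real" where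
  "Vfun Nn x k = Max ((\<lambda>i. max (x k i) (x (k - 1) i)) ` Nn)
               - Min ((\<lambda>i. min (x k i) (x (k - 1) i)) ` Nn)"

end

theory Submission
  imports Defs
begin

text \<open>Eliminating the velocities, the position of a normal agent satisfies, for every reference
  value B, x(k+2) - B = p (x(k+1) - B) + q (x(k) - B) + T^2/2 \<Sigma> a_ij (x_j(k+1) - B)
  + T^2/2 \<Sigma> a_ij (x_j(k) - B), the sums running over the neighbours kept by DP-MSR; the
  coefficients are nonnegative because 1 + T^2/2 \<le> \<alpha>T \<le> 2 - T^2/2. As at most f
  agents are malicious and f extreme values are removed on each side, every kept value lies
  between two normal values, so the interval spanned by the normal positions at two consecutive
  times never grows. Within a fixed number of steps it shrinks by a fixed factor: for f \<ge> 1 each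
  agent keeps a self weight of at least \<delta>, and (f+1, f+1)-robustness pushes some normal agent out
  of the top or the bottom layer of the interval at every step; for f = 0 the graph has a root,
  whose value spreads along walks to all agents. Iterating gives the geometric rate, and the
  nested intervals give the common limit.\<close>

lemma lower_removed_iff_upper_removed:
  "lower_removed f Nb r L \<longleftrightarrow> upper_removed f Nb (\<lambda>j. - r j) L"
  unfolding lower_removed_def upper_removed_def by auto

lemma upper_removed_subset:
  "upper_removed f Nb r U \<Longrightarrow> U \<subseteq> {j \<in> Nb. 0 \<le> r j}"
  unfolding upper_removed_def by (auto split: if_splits)

lemma upper_removed_card:
  "upper_removed f Nb r U \<Longrightarrow> card U \<le> f"
  unfolding upper_removed_def by (auto split: if_splits)

lemma upper_removed_zero:
  assumes "finite Nb" "upper_removed 0 Nb r U" shows "U = {}"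
proof -
  have "U \<subseteq> Nb" using upper_removed_subset[OF assms(2)] by blast
  then have "finite U" using assms(1) by (rule finite_subset)
  then show ?thesis using upper_removed_card[OF assms(2)] by simp
qed

lemma upper_removed_nonempty:
  assumes "upper_removed f Nb r U" "1 \<le> f" "j \<in> Nb" "0 \<le> r j" shows "U \<noteq> {}"
proof (cases "card {l \<in> Nb. 0 \<le> r l} < f")
  case True
  then show ?thesis using assms unfolding upper_removed_def by auto
next
  case False
  then have "card U = f" using assms(1) unfolding upper_removed_def by simp
  then show ?thesis using assms(2) by auto
qed

lemma upper_removed_kept_dominated:
  assumes fin: "finite Nb" and U: "upper_removed f Nb r U" and j: "j \<in> Nb" "j \<notin> U" "0 \<le> r j"
  shows "\<exists>W \<subseteq> Nb. card W = f + 1 \<and> (\<forall>l \<in> W. r j \<le> r l)"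
proof -
  have "\<not> card {l \<in> Nb. 0 \<le> r l} < f" using U j unfolding upper_removed_def by auto
  then have U': "U \<subseteq> Nb" "card U = f" "\<forall>l \<in> U. r j \<le> r l"
    using U j unfolding upper_removed_def by auto
  have "finite U" using U'(1) fin by (rule finite_subset)
  then have "card (insert j U) = f + 1" using U'(2) j(2) by simp
  then show ?thesis using U' j by (intro exI[of _ "insert j U"]) auto
qed

lemma digraph_nbrs_subset: "digraph n E \<Longrightarrow> nbrs E i \<subseteq> {1..n}"
  unfolding digraph_def nbrs_def by auto

lemma robust_less_card:
  assumes E: "digraph n E" and rob: "robust n E (f + 1) (f + 1)" shows "f < n"
proof -
  have n: "2 \<le> n" using E unfolding digraph_def by simp
  have reach_single: "card (reach_set E (f + 1) {l}) \<le> 1" for l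
    using card_mono[of "{l}" "reach_set E (f + 1) {l}"] unfolding reach_set_def by auto
  have in_nbrs: "card (nbrs E l - {l}) < n" if "l \<in> {1..n}" for l
  proof -
    have "card (nbrs E l - {l}) \<le> card ({1..n} - {l})"
      using digraph_nbrs_subset[OF E] by (intro card_mono) auto
    then show ?thesis using that n by simp
  qed
  have "reach_set E (f + 1) {1} = {1} \<or> reach_set E (f + 1) {2} = {2} \<or>
        f + 1 \<le> card (reach_set E (f + 1) {1}) + card (reach_set E (f + 1) {2})"
    using rob[unfolded robust_def, rule_format, of "{1}" "{2}"] n by simp
  then show ?thesis
  proof (elim disjE)
    assume "reach_set E (f + 1) {1} = {1}"
    then have "f + 1 \<le> card (nbrs E 1 - {1})" unfolding reach_set_def by blast
    then show ?thesis using in_nbrs[of 1] n by simp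
  next
    assume "reach_set E (f + 1) {2} = {2}"
    then have "f + 1 \<le> card (nbrs E 2 - {2})" unfolding reach_set_def by blast
    then show ?thesis using in_nbrs[of 2] n by simp
  next
    assume "f + 1 \<le> card (reach_set E (f + 1) {1}) + card (reach_set E (f + 1) {2})"
    then show ?thesis using reach_single[of 1] reach_single[of 2] n by linarith
  qed
qed

lemma robust_reach_outside:
  assumes rob: "robust n E r (f + 1)" and M: "finite M" "card M \<le> f"
    and S: "S1 \<subseteq> {1..n}" "S2 \<subseteq> {1..n}" "S1 \<inter> S2 = {}" "S1 - M \<noteq> {}" "S2 - M \<noteq> {}"
  shows "\<exists>i. i \<notin> M \<and> (i \<in> reach_set E r S1 \<or> i \<in> reach_set E r S2)"
proof -
  let ?R1 = "reach_set E r S1" and ?R2 = "reach_set E r S2"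
  have R: "?R1 \<subseteq> S1" "?R2 \<subseteq> S2" unfolding reach_set_def by auto
  have "S1 \<noteq> {}" "S2 \<noteq> {}" using S(4,5) by auto
  then have "?R1 = S1 \<or> ?R2 = S2 \<or> f + 1 \<le> card ?R1 + card ?R2"
    using rob[unfolded robust_def, rule_format, of S1 S2] S(1-3) by blast
  moreover have "\<not> ?R1 \<union> ?R2 \<subseteq> M" if card: "f + 1 \<le> card ?R1 + card ?R2"
  proof
    assume sub: "?R1 \<union> ?R2 \<subseteq> M"
    have "finite ?R1" "finite ?R2"
      using R S(1,2) finite_subset[OF _ finite_atLeastAtMost] by (meson order_trans)+
    then have "card (?R1 \<union> ?R2) = card ?R1 + card ?R2"
      using R S(3) by (intro card_Un_disjoint) auto
    moreover have "card (?R1 \<union> ?R2) \<le> card M" using M(1) sub by (rule card_mono)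
    ultimately show False using M(2) card by linarith
  qed
  ultimately show ?thesis using S(4,5) by blast
qed

lemma reach_set_closed:
  assumes "0 < r" "\<And>y. y \<in> S \<Longrightarrow> nbrs E y \<subseteq> S" shows "reach_set E r S = {}"
proof -
  have "card (nbrs E y - S) = 0" if "y \<in> S" for y
    using assms(2)[OF that] by (metis Diff_eq_empty_iff card.empty)
  then show ?thesis using assms(1) unfolding reach_set_def by (metis (no_types, lifting)
    empty_Collect_eq not_le)
qed

text \<open>A node with the fewest ancestors is a root: ancestor sets are closed under in-neighbours,
  so (1, 1)-robustness forbids two of them to be disjoint, and a common ancestor z of r and i has
  no more ancestors than r, hence the same ones, among them r.\<close>
lemma robust_one_one_root:
  assumes E: "digraph n E" and rob: "robust n E 1 1"
  shows "\<exists>r \<in> {1..n}. \<forall>i \<in> {1..n}. (r, i) \<in> E\<^sup>*"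
proof -
  define anc where "anc z = {l \<in> {1..n}. (l, z) \<in> E\<^sup>*}" for z
  have anc_self: "z \<in> anc z" if "z \<in> {1..n}" for z using that unfolding anc_def by simp
  have anc_closed: "nbrs E y \<subseteq> anc z" if "y \<in> anc z" for y z
  proof
    fix l assume l: "l \<in> nbrs E y"
    then have "(l, y) \<in> E" unfolding nbrs_def by simp
    moreover have "l \<in> {1..n}" using l digraph_nbrs_subset[OF E] by blast
    ultimately show "l \<in> anc z"
      using that unfolding anc_def by (auto intro: converse_rtrancl_into_rtrancl)
  qed
  have anc_fin: "finite (anc z)" for z unfolding anc_def by simp
  have "1 \<in> {1..n}" using E unfolding digraph_def by simp
  then obtain r where r: "r \<in> {1..n}" and r_min: "\<And>z. z \<in> {1..n} \<Longrightarrow> card (anc r) \<le> card (anc z)"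
    using ex_has_least_nat[of "\<lambda>z. z \<in> {1..n}" 1 "\<lambda>z. card (anc z)"] by blast
  have "(r, i) \<in> E\<^sup>*" if i: "i \<in> {1..n}" for i
  proof -
    have "anc r \<inter> anc i \<noteq> {}"
    proof
      assume "anc r \<inter> anc i = {}"
      moreover have "anc z \<subseteq> {1..n}" for z unfolding anc_def by blast
      moreover have "anc r \<noteq> {}" "anc i \<noteq> {}" using anc_self[OF r] anc_self[OF i] by blast+
      ultimately have "reach_set E 1 (anc r) = anc r \<or> reach_set E 1 (anc i) = anc i \<or>
          1 \<le> card (reach_set E 1 (anc r)) + card (reach_set E 1 (anc i))"
        using rob[unfolded robust_def, rule_format, of "anc r" "anc i"] by blast
      moreover have "reach_set E 1 (anc z) = {}" for z
        by (rule reach_set_closed) (auto dest: anc_closed)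
      ultimately show False using \<open>anc r \<noteq> {}\<close> \<open>anc i \<noteq> {}\<close> by simp
    qed
    then obtain z where z: "z \<in> anc r" "z \<in> anc i" by blast
    have sub: "anc z \<subseteq> anc r" using z(1) unfolding anc_def by auto
    have "z \<in> {1..n}" using z(1) unfolding anc_def by blast
    then have "card (anc r) \<le> card (anc z)" by (rule r_min)
    with card_mono[OF anc_fin sub] have "anc z = anc r"
      using card_subset_eq[OF anc_fin sub] by simp
    then have "(r, z) \<in> E\<^sup>*" using anc_self[OF r] unfolding anc_def by blast
    then show ?thesis using z(2) unfolding anc_def by auto
  qed
  then show ?thesis using r by blast
qed

lemma periodic_contraction_geometric:
  fixes D :: "nat \<Rightarrow> real"
  assumes mono: "\<And>t d. D (t + d) \<le> D t" and contr: "\<And>t. D (t + N) \<le> q * D t"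
    and N: "0 < N" and q: "0 < q" "q < 1" and D0: "0 \<le> D 0"
  shows "D t \<le> 1 / q * root N q ^ Suc t * D 0"
proof -
  define \<rho> where "\<rho> = root N q"
  have \<rho>: "0 < \<rho>" "\<rho> < 1" "\<rho> ^ N = q" unfolding \<rho>_def using N q by (simp_all add: real_root_pow_pos)
  have periods: "D (j * N + r) \<le> q ^ j * D 0" for j r
  proof (induction j)
    case 0
    show ?case using mono[of 0 r] by simp
  next
    case (Suc j)
    have "D (Suc j * N + r) \<le> q * D (j * N + r)"
      using contr[of "j * N + r"] by (simp add: algebra_simps)
    also have "\<dots> \<le> q * (q ^ j * D 0)" using Suc q by simp
    finally show ?case by simp
  qed
  define j where "j = t div N"
  have t: "t = j * N + t mod N" and "t mod N < N" unfolding j_def using N by simp_all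
  then have "Suc t \<le> Suc j * N" unfolding mult_Suc by linarith
  then have "\<rho> ^ (Suc j * N) \<le> \<rho> ^ Suc t" using \<rho> by (intro power_decreasing) auto
  moreover have "\<rho> ^ (Suc j * N) = q * q ^ j"
    using \<rho>(3) by (simp add: power_add power_mult mult.commute[of j N])
  then have "q ^ j = \<rho> ^ (Suc j * N) / q" using q by simp
  ultimately have "q ^ j \<le> \<rho> ^ Suc t / q" using q by (simp add: divide_right_mono)
  then have "q ^ j * D 0 \<le> \<rho> ^ Suc t / q * D 0" using D0 by (rule mult_right_mono)
  then show ?thesis using periods[of j "t mod N"] t unfolding \<rho>_def by simp
qed

lemma shrinking_pair_exhausted:
  fixes A B :: "nat \<Rightarrow> 'a set"
  assumes A: "\<And>s. A (Suc s) \<subseteq> A s" and B: "\<And>s. B (Suc s) \<subseteq> B s"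
    and strict: "\<And>s. A s \<noteq> {} \<Longrightarrow> B s \<noteq> {} \<Longrightarrow> A (Suc s) \<subset> A s \<or> B (Suc s) \<subset> B s"
    and fin: "finite (A 0)" "finite (B 0)" and m: "card (A 0) + card (B 0) \<le> m"
  shows "A m = {} \<or> B m = {}"
proof -
  have sub: "A s \<subseteq> A 0" "B s \<subseteq> B 0" for s
    using lift_Suc_antimono_le[of A, OF A, of 0 s] lift_Suc_antimono_le[of B, OF B, of 0 s]
      by simp_all
  have finite: "finite (A s)" "finite (B s)" for s
    using finite_subset[OF sub(1) fin(1)] finite_subset[OF sub(2) fin(2)] .
  define c where "c s = card (A s) + card (B s)" for s
  have decr: "c s + s \<le> c 0" if "A s \<noteq> {}" "B s \<noteq> {}" for s
    using that
  proof (induction s)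
    case (Suc s)
    then have ne: "A s \<noteq> {}" "B s \<noteq> {}" using A[of s] B[of s] by auto
    have le: "card (A (Suc s)) \<le> card (A s)" "card (B (Suc s)) \<le> card (B s)"
      using card_mono[OF finite(1) A] card_mono[OF finite(2) B] by blast+
    from strict[OF ne] have "c (Suc s) < c s"
    proof
      assume "A (Suc s) \<subset> A s"
      then have "card (A (Suc s)) < card (A s)" by (rule psubset_card_mono[OF finite(1)])
      then show ?thesis using le unfolding c_def by linarith
    next
      assume "B (Suc s) \<subset> B s"
      then have "card (B (Suc s)) < card (B s)" by (rule psubset_card_mono[OF finite(2)])
      then show ?thesis using le unfolding c_def by linarith
    qed
    then show ?case using Suc.IH[OF ne] by simp
  qed simp
  show ?thesis
  proof (rule ccontr)
    assume ne: "\<not> ?thesis"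
    then have "c m = 0" using decr[of m] m unfolding c_def by simp
    then show False using ne finite unfolding c_def by simp
  qed
qed

lemma sum_le_member_nonpos:
  fixes g :: "'a \<Rightarrow> 'b::ordered_comm_monoid_add"
  assumes "finite A" "j \<in> A" "\<And>l. l \<in> A \<Longrightarrow> g l \<le> 0"
  shows "sum g A \<le> g j"
proof -
  have "sum g A = g j + sum g (A - {j})" using assms(1,2) by (rule sum.remove)
  also have "\<dots> \<le> g j + 0" using assms(3) by (intro add_left_mono sum_nonpos) auto
  finally show ?thesis by simp
qed

definition kept ::
  "(nat \<times> nat) set \<Rightarrow> (nat \<Rightarrow> nat \<Rightarrow> nat set) \<Rightarrow> (nat \<Rightarrow> nat \<Rightarrow> nat set) \<Rightarrow> nat \<Rightarrow> nat \<Rightarrow> nat set"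
  where "kept E U L k i = nbrs E i - (U k i \<union> L k i)"

lemma kept_swap: "kept E L U = kept E U L"
  unfolding kept_def by (intro ext) blast

definition confined :: "nat set \<Rightarrow> (nat \<Rightarrow> nat \<Rightarrow> real) \<Rightarrow> nat \<Rightarrow> real \<Rightarrow> real \<Rightarrow> bool" where
  "confined N x k lo hi \<longleftrightarrow>
     (\<forall>i \<in> N. lo \<le> x k i \<and> x k i \<le> hi \<and> lo \<le> x (Suc k) i \<and> x (Suc k) i \<le> hi)"

lemma confined_uminus: "confined N (\<lambda>k i. - x k i) k lo hi \<longleftrightarrow> confined N x k (- hi) (- lo)"
  unfolding confined_def by auto

locale dpmsr_params =
  fixes n f :: nat and E :: "(nat \<times> nat) set" and a :: "nat \<Rightarrow> nat \<Rightarrow> real"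
    and \<gamma> T \<alpha> :: real
  assumes graph: "digraph n E" and weights: "admissible_weights n E \<gamma> a"
    and robust: "robust n E (f + 1) (f + 1)" and T_pos: "0 < T"
    and \<alpha>T_lower: "1 + T\<^sup>2 / 2 \<le> \<alpha> * T" and \<alpha>T_upper: "\<alpha> * T \<le> 2 - T\<^sup>2 / 2"
begin

text \<open>\<delta> bounds from below the weight T^2/2 a_ij of a kept neighbour in the two-step recursion,
  and the weight of the agent's own last value whenever a neighbour is removed. The contraction
  takes at most n + 1 steps when f \<ge> 1 and 2 |E| + 2 steps when f = 0; period covers both.\<close>
definition "\<delta> = T\<^sup>2 / 2 * min \<gamma> 1"
definition "period = 2 * card E + n + 3"
definition "rate = 1 - \<delta> ^ period / 2"
definition "\<rho> = root period rate"

lemma \<gamma>_pos: "0 < \<gamma>"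
  using weights unfolding admissible_weights_def by simp

lemma T_sq_le_one: "T\<^sup>2 \<le> 1"
  using \<alpha>T_lower \<alpha>T_upper by linarith

lemma \<delta>_pos: "0 < \<delta>"
  unfolding \<delta>_def using T_pos \<gamma>_pos by simp

lemma \<delta>_le_half: "\<delta> \<le> 1 / 2"
proof -
  have "T\<^sup>2 / 2 * min \<gamma> 1 \<le> 1 / 2 * 1" using T_sq_le_one \<gamma>_pos by (intro mult_mono) auto
  then show ?thesis unfolding \<delta>_def by simp
qed

lemma rate_bounds: "0 < rate" "rate < 1"
proof -
  have "\<delta> ^ period \<le> 1" using \<delta>_pos \<delta>_le_half by (intro power_le_one) auto
  then show "0 < rate" unfolding rate_def by simp
  show "rate < 1" unfolding rate_def using \<delta>_pos by simp
qed

lemma \<rho>_bounds: "0 < \<rho>" "\<rho> < 1"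
  unfolding \<rho>_def period_def using rate_bounds by simp_all

lemma nbrs_subset: "nbrs E i \<subseteq> {1..n}"
  using digraph_nbrs_subset[OF graph] .

lemma finite_nbrs: "finite (nbrs E i)"
  using nbrs_subset finite_subset by blast

lemma weight_lower: "j \<in> nbrs E i \<Longrightarrow> min \<gamma> 1 \<le> a i j"
  using weights unfolding admissible_weights_def nbrs_def by force

lemma weight_nonneg: "j \<in> nbrs E i \<Longrightarrow> 0 \<le> a i j"
  using weight_lower[of j i] \<gamma>_pos by linarith

lemma weight_sum_le_one: "i \<in> {1..n} \<Longrightarrow> (\<Sum>j \<in> nbrs E i. a i j) \<le> 1"
  using weights unfolding admissible_weights_def by blast

lemma \<delta>_le_weight: "j \<in> nbrs E i \<Longrightarrow> \<delta> \<le> T\<^sup>2 / 2 * a i j"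
  unfolding \<delta>_def using weight_lower by (simp add: mult_left_mono)

lemma edge_nbrs: "(j, i) \<in> E \<Longrightarrow> j \<in> nbrs E i \<and> i \<in> {1..n}"
  using graph unfolding digraph_def nbrs_def by auto

lemma rtrancl_relpow_bounded:
  assumes "(p, q) \<in> E\<^sup>*" shows "\<exists>d \<le> card E. (p, q) \<in> E ^^ d"
proof -
  have "finite E"
    using graph unfolding digraph_def by (meson finite_SigmaI finite_atLeastAtMost finite_subset)
  then show ?thesis using assms rtrancl_finite_eq_relpow by blast
qed

lemma damping_bounds: "0 < 1 - \<alpha> * T / 2" "1 - \<alpha> * T / 2 \<le> 1"
proof -
  have "0 < T\<^sup>2" using T_pos by simp
  then show "0 < 1 - \<alpha> * T / 2" "1 - \<alpha> * T / 2 \<le> 1" using \<alpha>T_lower \<alpha>T_upper by linarith+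
qed

end

text \<open>U k i and L k i are the neighbours a normal agent i discards at time k because of large and
  of small relative positions; the trajectory predicate only asserts that such sets exist.\<close>
locale dpmsr_run = dpmsr_params +
  fixes M :: "nat set" and x v u :: "nat \<Rightarrow> nat \<Rightarrow> real" and U L :: "nat \<Rightarrow> nat \<Rightarrow> nat set"
  assumes malicious_subset: "M \<subseteq> {1..n}" and malicious_card: "card M \<le> f"
    and position: "\<And>k i. i \<in> {1..n} - M \<Longrightarrow> x (Suc k) i = x k i + T * v k i + T\<^sup>2 / 2 * u k i"
    and velocity: "\<And>k i. i \<in> {1..n} - M \<Longrightarrow> v (Suc k) i = v k i + T * u k i"
    and removed_upper:
      "\<And>k i. i \<in> {1..n} - M \<Longrightarrow> upper_removed f (nbrs E i) (\<lambda>j. x k j - x k i) (U k i)"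
    and removed_lower:
      "\<And>k i. i \<in> {1..n} - M \<Longrightarrow> lower_removed f (nbrs E i) (\<lambda>j. x k j - x k i) (L k i)"
    and control: "\<And>k i. i \<in> {1..n} - M \<Longrightarrow>
      u k i = - (\<Sum>j \<in> kept E U L k i. a i j * (x k i - x k j)) - \<alpha> * v k i"
begin

abbreviation "normal \<equiv> {1..n} - M"
abbreviation "K \<equiv> kept E U L"

text \<open>Negating all positions, velocities and inputs and swapping the two removal sets gives again
  a run; the lower bounds below are obtained from the upper ones this way.\<close>
lemma mirror:
  "dpmsr_run n f E a \<gamma> T \<alpha> M (\<lambda>k i. - x k i) (\<lambda>k i. - v k i) (\<lambda>k i. - u k i) L U"
proof (intro dpmsr_run.intro dpmsr_params_axioms dpmsr_run_axioms.intro malicious_subset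
    malicious_card)
  fix k i assume i: "i \<in> normal"
  show "- x (Suc k) i = - x k i + T * - v k i + T\<^sup>2 / 2 * - u k i"
    using position[OF i] by simp
  show "- v (Suc k) i = - v k i + T * - u k i"
    using velocity[OF i] by simp
  show "upper_removed f (nbrs E i) (\<lambda>j. - x k j - - x k i) (L k i)"
    using removed_lower[OF i] by (simp add: lower_removed_iff_upper_removed)
  show "lower_removed f (nbrs E i) (\<lambda>j. - x k j - - x k i) (U k i)"
    using removed_upper[OF i] by (simp add: lower_removed_iff_upper_removed)
  show "- u k i = - (\<Sum>j \<in> kept E L U k i. a i j * (- x k i - - x k j)) - \<alpha> * - v k i"
  proof -
    have "(\<Sum>j \<in> K k i. a i j * (- x k i - - x k j)) = - (\<Sum>j \<in> K k i. a i j * (x k i - x k j))"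
      unfolding sum_negf[symmetric] by (rule sum.cong) (simp_all add: right_diff_distrib)
    then show ?thesis using control[OF i] unfolding kept_swap[of E L U] by simp
  qed
qed

lemma finite_malicious: "finite M"
  using malicious_subset finite_subset by blast

lemma kept_subset: "K k i \<subseteq> nbrs E i"
  unfolding kept_def by blast

lemma finite_kept: "finite (K k i)"
  using kept_subset finite_nbrs finite_subset by blast

lemma removed_lower_upper: "i \<in> normal \<Longrightarrow> upper_removed f (nbrs E i) (\<lambda>j. x k i - x k j) (L k i)"
  using removed_lower by (simp add: lower_removed_iff_upper_removed)

text \<open>A kept value above x k i is dominated by the f removed values and itself, and one of these
  f + 1 agents is normal.\<close>
lemma kept_le_normal:
  assumes i: "i \<in> normal" and j: "j \<in> K k i" shows "\<exists>l \<in> normal. x k j \<le> x k l"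
proof (cases "x k j \<le> x k i")
  case True
  then show ?thesis using i by blast
next
  case False
  have "\<exists>W \<subseteq> nbrs E i. card W = f + 1 \<and> (\<forall>l \<in> W. x k j - x k i \<le> x k l - x k i)"
    by (rule upper_removed_kept_dominated[OF finite_nbrs removed_upper[OF i]])
      (use j False in \<open>auto simp: kept_def\<close>)
  then obtain W where W: "W \<subseteq> nbrs E i" "card W = f + 1" "\<forall>l \<in> W. x k j - x k i \<le> x k l - x k i"
    by blast
  have "\<not> W \<subseteq> M"
  proof
    assume "W \<subseteq> M"
    then have "card W \<le> card M" using finite_malicious by (rule card_mono[rotated])
    then show False using W(2) malicious_card by simp
  qed
  then obtain l where l: "l \<in> W" "l \<notin> M" by blast
  then have "l \<in> normal" using W(1) nbrs_subset by blast
  moreover have "x k j \<le> x k l" using W(3) l(1) by simp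
  ultimately show ?thesis by blast
qed

lemma kept_ge_normal:
  assumes i: "i \<in> normal" and j: "j \<in> K k i" shows "\<exists>l \<in> normal. x k l \<le> x k j"
proof -
  interpret mirror: dpmsr_run n f E a \<gamma> T \<alpha> M "\<lambda>k i. - x k i" "\<lambda>k i. - v k i" "\<lambda>k i. - u k i" L U
    by (rule mirror)
  show ?thesis using mirror.kept_le_normal[OF i, of j k] j unfolding kept_swap[of E L U] by simp
qed

lemma kept_within:
  assumes "i \<in> normal" "j \<in> K k i" "\<forall>l \<in> normal. lo \<le> x k l \<and> x k l \<le> hi"
  shows "lo \<le> x k j" "x k j \<le> hi"
proof -
  obtain l l' where "l \<in> normal" "x k j \<le> x k l" "l' \<in> normal" "x k l' \<le> x k j"
    using kept_le_normal[OF assms(1,2)] kept_ge_normal[OF assms(1,2)] by blast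
  then show "lo \<le> x k j" "x k j \<le> hi" using assms(3) by (blast intro: order_trans)+
qed

lemma kept_meets_lower:
  assumes i: "i \<in> normal" and W: "W \<subseteq> nbrs E i" "f + 1 \<le> card W" "\<forall>j \<in> W. x k j < x k i"
  shows "W \<inter> K k i \<noteq> {}"
proof
  assume no_kept: "W \<inter> K k i = {}"
  have "U k i \<subseteq> {j. 0 \<le> x k j - x k i}" using upper_removed_subset[OF removed_upper[OF i]] by blast
  moreover have "W \<inter> {j. 0 \<le> x k j - x k i} = {}" using W(3) by auto
  ultimately have sub: "W \<subseteq> L k i" using no_kept W(1) unfolding kept_def by blast
  have "L k i \<subseteq> nbrs E i" using upper_removed_subset[OF removed_lower_upper[OF i]] by blast
  then have "finite (L k i)" using finite_nbrs by (rule finite_subset)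
  then have "card W \<le> card (L k i)" using sub by (rule card_mono)
  then show False using upper_removed_card[OF removed_lower_upper[OF i, of k]] W(2) by simp
qed

definition "kept_weight k i = (\<Sum>j \<in> K k i. a i j)"
definition "coupling k i = (\<Sum>j \<in> K k i. a i j * (x k j - x k i))"

lemma kept_weight_le_one:
  assumes "i \<in> normal" shows "kept_weight k i \<le> 1"
proof -
  have "kept_weight k i \<le> (\<Sum>j \<in> nbrs E i. a i j)"
    unfolding kept_weight_def
      using kept_subset weight_nonneg by (intro sum_mono2[OF finite_nbrs]) blast+
  also have "\<dots> \<le> 1" using assms weight_sum_le_one by simp
  finally show ?thesis .
qed

lemma kept_weight_le_removed:
  assumes i: "i \<in> normal" and f: "1 \<le> f \<or> nbrs E i = {}"
  shows "kept_weight k i \<le> 1 - min \<gamma> 1"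
proof (cases "nbrs E i = {}")
  case True
  then show ?thesis using kept_subset[of k i] unfolding kept_weight_def by auto
next
  case False
  then obtain j0 where j0: "j0 \<in> nbrs E i" by blast
  have f1: "1 \<le> f" using f False by simp
  have "U k i \<union> L k i \<noteq> {}"
  proof (cases "0 \<le> x k j0 - x k i")
    case True
    then show ?thesis using upper_removed_nonempty[OF removed_upper[OF i] f1 j0] by blast
  next
    case False
    then show ?thesis using upper_removed_nonempty[OF removed_lower_upper[OF i] f1 j0] by simp
  qed
  moreover have "U k i \<union> L k i \<subseteq> nbrs E i"
    using upper_removed_subset[OF removed_upper[OF i, of k]]
      upper_removed_subset[OF removed_lower_upper[OF i, of k]] by blast
  ultimately obtain j where j: "j \<in> nbrs E i" "j \<notin> K k i" unfolding kept_def by blast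
  have "kept_weight k i + a i j = (\<Sum>l \<in> insert j (K k i). a i l)"
    unfolding kept_weight_def using j(2) finite_kept by simp
  also have "\<dots> \<le> (\<Sum>l \<in> nbrs E i. a i l)"
    using j(1) kept_subset weight_nonneg by (intro sum_mono2[OF finite_nbrs]) blast+
  also have "\<dots> \<le> 1" using i weight_sum_le_one by simp
  finally show ?thesis using weight_lower[OF j(1)] by linarith
qed

lemma input_eq:
  assumes i: "i \<in> normal" shows "u k i = coupling k i - \<alpha> * v k i"
proof -
  have "(\<Sum>j \<in> K k i. a i j * (x k i - x k j)) = - coupling k i"
    unfolding coupling_def sum_negf[symmetric] by (rule sum.cong) (simp_all add: right_diff_distrib)
  then show ?thesis using control[OF i] by simp
qed

lemma coupling_shift:
  "coupling k i = (\<Sum>j \<in> K k i. a i j * (x k j - B)) - kept_weight k i * (x k i - B)"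
  unfolding coupling_def kept_weight_def sum_distrib_right sum_subtractf[symmetric]
  by (rule sum.cong) (simp_all add: algebra_simps)

lemma position_recurrence:
  assumes i: "i \<in> normal"
  shows "x (k + 2) i = (2 - \<alpha> * T) * x (k + 1) i - (1 - \<alpha> * T) * x k i
    + T\<^sup>2 / 2 * coupling (k + 1) i + T\<^sup>2 / 2 * coupling k i"
proof -
  have x1: "x (Suc k) i = x k i + T * v k i + T\<^sup>2 / 2 * (coupling k i - \<alpha> * v k i)"
    and v1: "v (Suc k) i = v k i + T * (coupling k i - \<alpha> * v k i)"
    and x2: "x (Suc (Suc k)) i = x (Suc k) i + T * v (Suc k) i
      + T\<^sup>2 / 2 * (coupling (Suc k) i - \<alpha> * v (Suc k) i)"
    using position[OF i] velocity[OF i] input_eq[OF i] by simp_all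
  show ?thesis unfolding numeral_2_eq_2 add_Suc_right add_0_right Suc_eq_plus1[symmetric] x2 v1 x1
    by (simp add: field_simps power2_eq_square)
qed

text \<open>The coefficients are nonnegative and sum to one: x (k+2) i is a convex combination of
  x (k+1) i, x k i and the kept neighbour values at times k+1 and k.\<close>
lemma position_two_step:
  assumes i: "i \<in> normal"
  shows "x (k + 2) i - B =
      (2 - \<alpha> * T - T\<^sup>2 / 2 * kept_weight (k + 1) i) * (x (k + 1) i - B)
    + (\<alpha> * T - 1 - T\<^sup>2 / 2 * kept_weight k i) * (x k i - B)
    + T\<^sup>2 / 2 * (\<Sum>j \<in> K (k + 1) i. a i j * (x (k + 1) j - B))
    + T\<^sup>2 / 2 * (\<Sum>j \<in> K k i. a i j * (x k j - B))"
  unfolding position_recurrence[OF i] coupling_shift[of "k + 1" i B] coupling_shift[of k i B]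
  by (simp add: field_simps)

lemma coupling_gain_le: "i \<in> normal \<Longrightarrow> T\<^sup>2 / 2 * kept_weight k i \<le> T\<^sup>2 / 2"
  using kept_weight_le_one mult_left_mono[of "kept_weight k i" 1 "T\<^sup>2 / 2"] by simp

lemma next_coeff_nonneg:
  assumes "i \<in> normal" shows "0 \<le> 2 - \<alpha> * T - T\<^sup>2 / 2 * kept_weight k i"
  using coupling_gain_le[OF assms, of k] \<alpha>T_upper by linarith

lemma prev_coeff_nonneg:
  assumes "i \<in> normal" shows "0 \<le> \<alpha> * T - 1 - T\<^sup>2 / 2 * kept_weight k i"
  using coupling_gain_le[OF assms, of k] \<alpha>T_lower by linarith

lemma \<delta>_le_next_coeff:
  assumes "i \<in> normal" "1 \<le> f \<or> nbrs E i = {}"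
  shows "\<delta> \<le> 2 - \<alpha> * T - T\<^sup>2 / 2 * kept_weight k i"
proof -
  have "T\<^sup>2 / 2 * kept_weight k i \<le> T\<^sup>2 / 2 * (1 - min \<gamma> 1)"
    using kept_weight_le_removed[OF assms] by (simp add: mult_left_mono)
  then show ?thesis using \<alpha>T_upper unfolding \<delta>_def by (simp add: algebra_simps)
qed

lemma kept_sum_bounds:
  assumes i: "i \<in> normal" and bound: "\<forall>l \<in> normal. lo \<le> x k l \<and> x k l \<le> hi"
  shows kept_sum_nonpos: "(\<Sum>j \<in> K k i. a i j * (x k j - hi)) \<le> 0"
    and kept_sum_le_kept: "j \<in> K k i \<Longrightarrow>
      T\<^sup>2 / 2 * (\<Sum>j \<in> K k i. a i j * (x k j - hi)) \<le> \<delta> * (x k j - hi)"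
proof -
  have below: "x k j \<le> hi" if "j \<in> K k i" for j using kept_within(2)[OF i that bound] .
  have summand: "a i j * (x k j - hi) \<le> 0" if "j \<in> K k i" for j
    using below[OF that] weight_nonneg kept_subset that by (simp add: mult_nonneg_nonpos subset_iff)
  show "(\<Sum>j \<in> K k i. a i j * (x k j - hi)) \<le> 0" using summand by (rule sum_nonpos)
  show "T\<^sup>2 / 2 * (\<Sum>j \<in> K k i. a i j * (x k j - hi)) \<le> \<delta> * (x k j - hi)" if j: "j \<in> K k i"
  proof -
    have "(\<Sum>j \<in> K k i. a i j * (x k j - hi)) \<le> a i j * (x k j - hi)"
      by (rule sum_le_member_nonpos[OF finite_kept j summand])
    then have "T\<^sup>2 / 2 * (\<Sum>j \<in> K k i. a i j * (x k j - hi)) \<le> T\<^sup>2 / 2 * (a i j * (x k j - hi))"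
      by (rule mult_left_mono) simp
    also have "\<dots> = (T\<^sup>2 / 2 * a i j) * (x k j - hi)" by (rule mult.assoc[symmetric])
    also have "\<dots> \<le> \<delta> * (x k j - hi)"
      using \<delta>_le_weight[of j i] kept_subset j below[OF j] by (intro mult_right_mono_neg) auto
    finally show ?thesis .
  qed
qed

lemma step_upper:
  assumes i: "i \<in> normal" and conf: "confined normal x k lo hi"
  shows step_le: "x (k + 2) i \<le> hi"
    and step_le_self: "1 \<le> f \<or> nbrs E i = {} \<Longrightarrow> x (k + 2) i - hi \<le> \<delta> * (x (k + 1) i - hi)"
    and step_le_next: "j \<in> K (k + 1) i \<Longrightarrow> x (k + 2) i - hi \<le> \<delta> * (x (k + 1) j - hi)"
    and step_le_prev: "j \<in> K k i \<Longrightarrow> x (k + 2) i - hi \<le> \<delta> * (x k j - hi)"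
proof -
  let ?p = "2 - \<alpha> * T - T\<^sup>2 / 2 * kept_weight (k + 1) i"
  let ?q = "\<alpha> * T - 1 - T\<^sup>2 / 2 * kept_weight k i"
  let ?A = "\<Sum>j \<in> K (k + 1) i. a i j * (x (k + 1) j - hi)"
  let ?C = "\<Sum>j \<in> K k i. a i j * (x k j - hi)"
  have at_k: "\<forall>l \<in> normal. lo \<le> x k l \<and> x k l \<le> hi"
    and at_k1: "\<forall>l \<in> normal. lo \<le> x (k + 1) l \<and> x (k + 1) l \<le> hi"
    using conf unfolding confined_def by auto
  have P: "?p * (x (k + 1) i - hi) \<le> 0"
    using next_coeff_nonneg[OF i] at_k1 i by (simp add: mult_nonneg_nonpos)
  have Q: "?q * (x k i - hi) \<le> 0"
    using prev_coeff_nonneg[OF i] at_k i by (simp add: mult_nonneg_nonpos)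
  have A: "T\<^sup>2 / 2 * ?A \<le> 0" using kept_sum_nonpos[OF i at_k1] by (simp add: mult_nonneg_nonpos)
  have C: "T\<^sup>2 / 2 * ?C \<le> 0" using kept_sum_nonpos[OF i at_k] by (simp add: mult_nonneg_nonpos)
  note two_step = position_two_step[OF i, of k hi]
  show "x (k + 2) i \<le> hi" using two_step P Q A C by linarith
  show "x (k + 2) i - hi \<le> \<delta> * (x (k + 1) i - hi)" if "1 \<le> f \<or> nbrs E i = {}"
  proof -
    have "?p * (x (k + 1) i - hi) \<le> \<delta> * (x (k + 1) i - hi)"
      using \<delta>_le_next_coeff[OF i that] at_k1 i by (intro mult_right_mono_neg) auto
    then show ?thesis using two_step Q A C by linarith
  qed
  show "x (k + 2) i - hi \<le> \<delta> * (x (k + 1) j - hi)" if "j \<in> K (k + 1) i"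
    using two_step P Q C kept_sum_le_kept[OF i at_k1 that] by linarith
  show "x (k + 2) i - hi \<le> \<delta> * (x k j - hi)" if "j \<in> K k i"
    using two_step P Q A kept_sum_le_kept[OF i at_k that] by linarith
qed

lemma step_lower:
  assumes i: "i \<in> normal" and conf: "confined normal x k lo hi"
  shows step_ge: "lo \<le> x (k + 2) i"
    and step_ge_self: "1 \<le> f \<or> nbrs E i = {} \<Longrightarrow> \<delta> * (x (k + 1) i - lo) \<le> x (k + 2) i - lo"
proof -
  interpret mirror: dpmsr_run n f E a \<gamma> T \<alpha> M "\<lambda>k i. - x k i" "\<lambda>k i. - v k i" "\<lambda>k i. - u k i" L U
    by (rule mirror)
  have "confined normal (\<lambda>k i. - x k i) k (- hi) (- lo)"
    using conf by (simp add: confined_uminus)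
  note upper = mirror.step_upper[OF i this]
  show "lo \<le> x (k + 2) i" using upper(1) by simp
  show "\<delta> * (x (k + 1) i - lo) \<le> x (k + 2) i - lo" if "1 \<le> f \<or> nbrs E i = {}"
    using upper(2)[OF that] by (simp add: algebra_simps)
qed

lemma confined_Suc:
  assumes conf: "confined normal x k lo hi" shows "confined normal x (Suc k) lo hi"
  unfolding confined_def
proof
  fix i assume i: "i \<in> normal"
  have "lo \<le> x (k + 2) i" "x (k + 2) i \<le> hi" using step_ge[OF i conf] step_le[OF i conf] .
  then show "lo \<le> x (Suc k) i \<and> x (Suc k) i \<le> hi \<and> lo \<le> x (Suc (Suc k)) i \<and> x (Suc (Suc k)) i \<le> hi"
    using conf i unfolding confined_def by (simp add: numeral_2_eq_2)
qed

lemma confined_later: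
  assumes "confined normal x k lo hi" "k \<le> k'" shows "confined normal x k' lo hi"
  using assms(2) by (induction k' rule: dec_induct) (use assms(1) confined_Suc in auto)

lemma normal_nonempty: "normal \<noteq> {}"
proof
  assume "normal = {}"
  then have "card {1..n} \<le> card M" using finite_malicious by (intro card_mono) auto
  then show False using malicious_card robust_less_card[OF graph robust] by simp
qed

definition "Vmax k = Max ((\<lambda>i. max (x (Suc k) i) (x k i)) ` normal)"
definition "Vmin k = Min ((\<lambda>i. min (x (Suc k) i) (x k i)) ` normal)"

lemma Vfun_Suc: "Vfun normal x (Suc k) = Vmax k - Vmin k"
  unfolding Vfun_def Vmax_def Vmin_def by simp

lemma confined_Vmin_Vmax: "confined normal x k (Vmin k) (Vmax k)"
proof -
  have "finite normal" by simp
  then show ?thesis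
    unfolding confined_def Vmax_def Vmin_def
    using Max_ge[OF finite_imageI] Min_le[OF finite_imageI]
    by (meson imageI max.boundedE min.boundedE)
qed

lemma confined_bounds_V:
  assumes "confined normal x k lo hi" shows "lo \<le> Vmin k" "Vmax k \<le> hi"
  using assms normal_nonempty unfolding confined_def Vmax_def Vmin_def
  by (simp_all add: Max_le_iff Min_ge_iff)

lemma Vmin_le_Vmax: "Vmin k \<le> Vmax k"
proof -
  obtain i where "i \<in> normal" using normal_nonempty by blast
  then show ?thesis using confined_Vmin_Vmax[of k] unfolding confined_def by force
qed

lemma V_monotone: "Vmin k \<le> Vmin (k + d)" "Vmax (k + d) \<le> Vmax k"
  using confined_bounds_V[OF confined_later[OF confined_Vmin_Vmax]] by auto

definition "upper_layer k c = {i \<in> normal. c < x k i}"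
definition "lower_layer k c = {i \<in> normal. x k i < c}"

lemma upper_layer_antimono: "c \<le> c' \<Longrightarrow> upper_layer k c' \<subseteq> upper_layer k c"
  unfolding upper_layer_def by auto

lemma lower_layer_mono: "c' \<le> c \<Longrightarrow> lower_layer k c' \<subseteq> lower_layer k c"
  unfolding lower_layer_def by auto

lemma upper_layer_shrinks:
  assumes "1 \<le> f" "confined normal x k lo hi"
  shows "upper_layer (k + 2) (hi - \<delta> * e) \<subseteq> upper_layer (k + 1) (hi - e)"
proof
  fix i assume "i \<in> upper_layer (k + 2) (hi - \<delta> * e)"
  then have i: "i \<in> normal" "hi - \<delta> * e < x (k + 2) i" unfolding upper_layer_def by auto
  show "i \<in> upper_layer (k + 1) (hi - e)"
  proof (rule ccontr)
    assume "i \<notin> upper_layer (k + 1) (hi - e)"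
    then have "x (k + 1) i - hi \<le> - e" using i(1) unfolding upper_layer_def by auto
    then have "\<delta> * (x (k + 1) i - hi) \<le> \<delta> * - e" using \<delta>_pos by (intro mult_left_mono) auto
    then show False using step_le_self[OF i(1) assms(2)] assms(1) i(2) by simp
  qed
qed

lemma lower_layer_shrinks:
  assumes "1 \<le> f" "confined normal x k lo hi"
  shows "lower_layer (k + 2) (lo + \<delta> * e) \<subseteq> lower_layer (k + 1) (lo + e)"
proof
  fix i assume "i \<in> lower_layer (k + 2) (lo + \<delta> * e)"
  then have i: "i \<in> normal" "x (k + 2) i < lo + \<delta> * e" unfolding lower_layer_def by auto
  show "i \<in> lower_layer (k + 1) (lo + e)"
  proof (rule ccontr)
    assume "i \<notin> lower_layer (k + 1) (lo + e)"
    then have "e \<le> x (k + 1) i - lo" using i(1) unfolding lower_layer_def by auto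
    then have "\<delta> * e \<le> \<delta> * (x (k + 1) i - lo)" using \<delta>_pos by (intro mult_left_mono) auto
    then show False using step_ge_self[OF i(1) assms(2)] assms(1) i(2) by simp
  qed
qed

lemma reach_upper_layer_drops:
  assumes i: "i \<in> normal" and conf: "confined normal x k lo hi"
    and reach: "i \<in> reach_set E (f + 1) {l \<in> {1..n}. hi - e < x (k + 1) l}"
  shows "x (k + 2) i \<le> hi - \<delta> * e"
proof -
  let ?S = "{l \<in> {1..n}. hi - e < x (k + 1) l}"
  have i_high: "hi - e < x (k + 1) i" and card: "f + 1 \<le> card (nbrs E i - ?S)"
    using reach unfolding reach_set_def by auto
  have low: "x (k + 1) j \<le> hi - e" if "j \<in> nbrs E i - ?S" for j
    using that nbrs_subset[of i] by auto
  then have "\<forall>j \<in> nbrs E i - ?S. x (k + 1) j < x (k + 1) i" using i_high by force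
  then obtain j where j: "j \<in> nbrs E i - ?S" "j \<in> K (k + 1) i"
    using kept_meets_lower[OF i _ card] by blast
  have "x (k + 2) i - hi \<le> \<delta> * (x (k + 1) j - hi)" by (rule step_le_next[OF i conf j(2)])
  also have "\<dots> \<le> \<delta> * (- e)" using low[OF j(1)] \<delta>_pos by (intro mult_left_mono) auto
  finally show ?thesis by simp
qed

lemma reach_lower_layer_rises:
  assumes i: "i \<in> normal" and conf: "confined normal x k lo hi"
    and reach: "i \<in> reach_set E (f + 1) {l \<in> {1..n}. x (k + 1) l < lo + e}"
  shows "lo + \<delta> * e \<le> x (k + 2) i"
proof -
  interpret mirror: dpmsr_run n f E a \<gamma> T \<alpha> M "\<lambda>k i. - x k i" "\<lambda>k i. - v k i" "\<lambda>k i. - u k i" L U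
    by (rule mirror)
  have "confined normal (\<lambda>k i. - x k i) k (- hi) (- lo)"
    using conf by (simp add: confined_uminus)
  moreover have "{l \<in> {1..n}. - lo - e < - x (k + 1) l} = {l \<in> {1..n}. x (k + 1) l < lo + e}"
    by auto
  ultimately show ?thesis
    using mirror.reach_upper_layer_drops[OF i, of k "- hi" "- lo" e] reach by simp
qed

text \<open>Where the upper layer above hi - e and the lower layer below lo + e of the normal agents
  are both nonempty, (f+1, f+1)-robustness makes one normal agent in one of them see f + 1
  neighbours outside its layer, and so leave it by a margin proportional to e.\<close>
lemma robust_progress:
  assumes f: "1 \<le> f" and conf: "confined normal x k lo hi" and sep: "lo + e \<le> hi - e"
    and ne: "upper_layer (k + 1) (hi - e) \<noteq> {}" "lower_layer (k + 1) (lo + e) \<noteq> {}"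
  shows "upper_layer (k + 2) (hi - \<delta> * e) \<subset> upper_layer (k + 1) (hi - e) \<or>
    lower_layer (k + 2) (lo + \<delta> * e) \<subset> lower_layer (k + 1) (lo + e)"
proof -
  define S1 where "S1 = {l \<in> {1..n}. hi - e < x (k + 1) l}"
  define S2 where "S2 = {l \<in> {1..n}. x (k + 1) l < lo + e}"
  have "S1 \<subseteq> {1..n}" "S2 \<subseteq> {1..n}" "S1 \<inter> S2 = {}" "S1 - M \<noteq> {}" "S2 - M \<noteq> {}"
    using sep ne unfolding S1_def S2_def upper_layer_def lower_layer_def by auto
  then obtain i where i: "i \<notin> M" "i \<in> reach_set E (f + 1) S1 \<or> i \<in> reach_set E (f + 1) S2"
    using robust_reach_outside[OF robust finite_malicious malicious_card] by blast
  from i(2) show ?thesis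
  proof
    assume reach: "i \<in> reach_set E (f + 1) S1"
    then have "i \<in> upper_layer (k + 1) (hi - e)"
      using i(1) unfolding S1_def reach_set_def upper_layer_def by auto
    moreover have "i \<notin> upper_layer (k + 2) (hi - \<delta> * e)"
      using reach_upper_layer_drops[OF _ conf reach[unfolded S1_def]] i(1)
        unfolding upper_layer_def by auto
    ultimately show ?thesis using upper_layer_shrinks[OF f conf] by blast
  next
    assume reach: "i \<in> reach_set E (f + 1) S2"
    then have "i \<in> lower_layer (k + 1) (lo + e)"
      using i(1) unfolding S2_def reach_set_def lower_layer_def by auto
    moreover have "i \<notin> lower_layer (k + 2) (lo + \<delta> * e)"
      using reach_lower_layer_rises[OF _ conf reach[unfolded S2_def]] i(1)
        unfolding lower_layer_def by auto
    ultimately show ?thesis using lower_layer_shrinks[OF f conf] by blast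
  qed
qed

lemma confined_upper_layer_empty:
  assumes "confined normal x k lo hi" "upper_layer k c = {}" "upper_layer (Suc k) c = {}"
  shows "confined normal x k lo c"
  unfolding confined_def
proof
  fix i assume i: "i \<in> normal"
  have "x k i \<le> c" "x (Suc k) i \<le> c"
    using assms(2,3) i unfolding upper_layer_def by (auto simp: set_eq_iff not_less)
  then show "lo \<le> x k i \<and> x k i \<le> c \<and> lo \<le> x (Suc k) i \<and> x (Suc k) i \<le> c"
    using assms(1) i unfolding confined_def by simp
qed

lemma confined_lower_layer_empty:
  assumes "confined normal x k lo hi" "lower_layer k c = {}" "lower_layer (Suc k) c = {}"
  shows "confined normal x k c hi"
  unfolding confined_def
proof
  fix i assume i: "i \<in> normal"
  have "c \<le> x k i" "c \<le> x (Suc k) i"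
    using assms(2,3) i unfolding lower_layer_def by (auto simp: set_eq_iff not_less)
  then show "c \<le> x k i \<and> x k i \<le> hi \<and> c \<le> x (Suc k) i \<and> x (Suc k) i \<le> hi"
    using assms(1) i unfolding confined_def by simp
qed

lemma contraction_robust:
  assumes f: "1 \<le> f"
  shows "Vmax (t + Suc n) - Vmin (t + Suc n) \<le> (1 - \<delta> ^ Suc n / 2) * (Vmax t - Vmin t)"
proof -
  define hi lo where "hi = Vmax t" and "lo = Vmin t"
  define e where "e s = (hi - lo) / 2 * \<delta> ^ s" for s
  have conf: "confined normal x (t + s) lo hi" for s
    unfolding hi_def lo_def using confined_later[OF confined_Vmin_Vmax, of t "t + s"] by simp
  have e_nonneg: "0 \<le> e s" for s
    unfolding e_def hi_def lo_def using Vmin_le_Vmax \<delta>_pos by simp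
  have e_Suc: "e (Suc s) = \<delta> * e s" for s unfolding e_def by simp
  have e_le: "e (Suc s) \<le> e s" for s
    using mult_left_le_one_le[OF e_nonneg[of s], of \<delta>] \<delta>_pos \<delta>_le_half e_Suc by simp
  have sep: "lo + e s \<le> hi - e s" for s
    using lift_Suc_antimono_le[of e, OF e_le, of 0 s] unfolding e_def[of 0] by simp
  define high low where "high s = upper_layer (t + s + 1) (hi - e s)"
    and "low s = lower_layer (t + s + 1) (lo + e s)"
    for s
  have shrink: "high (Suc s) \<subseteq> high s" "low (Suc s) \<subseteq> low s" for s
    using upper_layer_shrinks[OF f conf, of s "e s"] lower_layer_shrinks[OF f conf, of s "e s"]
    unfolding high_def low_def e_Suc by simp_all
  have progress: "high (Suc s) \<subset> high s \<or> low (Suc s) \<subset> low s" if "high s \<noteq> {}" "low s \<noteq> {}" for s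
    using robust_progress[OF f conf sep] that unfolding high_def low_def e_Suc by simp
  have "card (high 0) + card (low 0) = card (high 0 \<union> low 0)"
    using sep[of 0] unfolding high_def low_def upper_layer_def lower_layer_def
    by (intro card_Un_disjoint[symmetric]) auto
  also have "\<dots> \<le> card {1..n}"
    unfolding high_def low_def upper_layer_def lower_layer_def by (intro card_mono) auto
  finally have "high n = {} \<or> low n = {}"
    by (intro shrinking_pair_exhausted[of high low, OF shrink progress])
      (auto simp: high_def low_def upper_layer_def lower_layer_def)
  then have "confined normal x (t + Suc n) lo (hi - e (Suc n)) \<or>
      confined normal x (t + Suc n) (lo + e (Suc n)) hi"
  proof
    assume "high n = {}"
    then have "upper_layer (t + Suc n) (hi - e (Suc n)) = {}"
      "upper_layer (Suc (t + Suc n)) (hi - e (Suc n)) = {}"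
      using upper_layer_antimono[of "hi - e n" "hi - e (Suc n)"] e_le[of n] shrink(1)[of n]
      unfolding high_def by auto
    then show ?thesis using confined_upper_layer_empty[OF conf[of "Suc n"]] by blast
  next
    assume "low n = {}"
    then have "lower_layer (t + Suc n) (lo + e (Suc n)) = {}"
      "lower_layer (Suc (t + Suc n)) (lo + e (Suc n)) = {}"
      using lower_layer_mono[of "lo + e (Suc n)" "lo + e n"] e_le[of n] shrink(2)[of n]
      unfolding low_def by auto
    then show ?thesis using confined_lower_layer_empty[OF conf[of "Suc n"]] by blast
  qed
  then have "Vmax (t + Suc n) - Vmin (t + Suc n) \<le> hi - lo - e (Suc n)"
    using confined_bounds_V by fastforce
  also have "\<dots> = (1 - \<delta> ^ Suc n / 2) * (Vmax t - Vmin t)"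
    unfolding e_def hi_def lo_def by (simp add: algebra_simps)
  finally show ?thesis .
qed

lemma normal_eq_nodes: "f = 0 \<Longrightarrow> normal = {1..n}"
  using malicious_card finite_malicious by simp

lemma kept_all:
  assumes "f = 0" "i \<in> normal" shows "K k i = nbrs E i"
proof -
  have "U k i = {}" "L k i = {}"
    using upper_removed_zero[OF finite_nbrs] removed_upper[OF assms(2), of k]
      removed_lower_upper[OF assms(2), of k] assms(1) by simp_all
  then show ?thesis unfolding kept_def by simp
qed

text \<open>Without faults nothing is removed, so the self weight of an agent may vanish. Instead, for
  a root r, the distance of x (t+1) r to the upper end hi of the interval is propagated along
  walks to all agents, at a loss of a factor \<delta> per step.\<close>
context
  fixes t :: nat and lo hi :: real and r :: nat
  assumes no_faults: "f = 0" and conf: "confined normal x t lo hi"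
    and root: "r \<in> {1..n}" "\<forall>i \<in> {1..n}. (r, i) \<in> E\<^sup>*"
begin

lemma anchor_le_hi: "x (t + 1) r \<le> hi"
  using conf root(1) unfolding confined_def normal_eq_nodes[OF no_faults] by simp

lemma anchor_weaken: "\<eta>' \<le> \<eta> \<Longrightarrow> \<eta> * (x (t + 1) r - hi) \<le> \<eta>' * (x (t + 1) r - hi)"
  using anchor_le_hi by (intro mult_right_mono_neg) auto

lemma hop_next:
  assumes "t \<le> s" "(j, i) \<in> E" "x (s + 1) j - hi \<le> \<eta> * (x (t + 1) r - hi)"
  shows "x (s + 2) i - hi \<le> \<delta> * \<eta> * (x (t + 1) r - hi)"
proof -
  have i: "i \<in> normal" using edge_nbrs[OF assms(2)] normal_eq_nodes[OF no_faults] by simp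
  have j: "j \<in> K (s + 1) i" using edge_nbrs[OF assms(2)] kept_all[OF no_faults i] by simp
  have "x (s + 2) i - hi \<le> \<delta> * (x (s + 1) j - hi)"
    by (rule step_le_next[OF i confined_later[OF conf assms(1)] j])
  also have "\<dots> \<le> \<delta> * (\<eta> * (x (t + 1) r - hi))" using assms(3) \<delta>_pos by (intro mult_left_mono) auto
  finally show ?thesis by (simp add: mult.assoc)
qed

lemma hop_prev:
  assumes "t \<le> s" "(j, i) \<in> E" "x s j - hi \<le> \<eta> * (x (t + 1) r - hi)"
  shows "x (s + 2) i - hi \<le> \<delta> * \<eta> * (x (t + 1) r - hi)"
proof -
  have i: "i \<in> normal" using edge_nbrs[OF assms(2)] normal_eq_nodes[OF no_faults] by simp
  have j: "j \<in> K s i" using edge_nbrs[OF assms(2)] kept_all[OF no_faults i] by simp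
  have "x (s + 2) i - hi \<le> \<delta> * (x s j - hi)"
    by (rule step_le_prev[OF i confined_later[OF conf assms(1)] j])
  also have "\<dots> \<le> \<delta> * (\<eta> * (x (t + 1) r - hi))" using assms(3) \<delta>_pos by (intro mult_left_mono) auto
  finally show ?thesis by (simp add: mult.assoc)
qed

lemma hop_self:
  assumes "t \<le> s" "i \<in> {1..n}" "nbrs E i = {}" "x (s + 1) i - hi \<le> \<eta> * (x (t + 1) r - hi)"
  shows "x (s + 2) i - hi \<le> \<delta> * \<eta> * (x (t + 1) r - hi)"
proof -
  have i: "i \<in> normal" using assms(2) normal_eq_nodes[OF no_faults] by simp
  have "x (s + 2) i - hi \<le> \<delta> * (x (s + 1) i - hi)"
    using step_le_self[OF i confined_later[OF conf assms(1)]] assms(3) by simp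
  also have "\<dots> \<le> \<delta> * (\<eta> * (x (t + 1) r - hi))" using assms(4) \<delta>_pos by (intro mult_left_mono) auto
  finally show ?thesis by (simp add: mult.assoc)
qed

text \<open>Each edge is traversed either in one step, through the newer neighbour value, or in two
  steps, through the older one; so a walk of length k transmits the bound to its end at every
  time between k and 2k after its start.\<close>
lemma walk_anchor:
  assumes b: "t + 1 \<le> b" and start: "x b w - hi \<le> \<delta> ^ m * (x (t + 1) r - hi)"
  shows "(w, z) \<in> E ^^ k \<Longrightarrow> k \<le> s \<Longrightarrow> s \<le> 2 * k \<Longrightarrow>
    x (b + s) z - hi \<le> \<delta> ^ (m + s) * (x (t + 1) r - hi)"
proof (induction k arbitrary: s z)
  case 0
  then show ?case using start by simp
next
  case (Suc k)
  obtain y where y: "(w, y) \<in> E ^^ k" "(y, z) \<in> E" using Suc.prems(1) by (rule relpow_Suc_E)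
  show ?case
  proof (cases "s \<le> 2 * k + 1")
    case True
    then obtain s' where s: "s = Suc s'" "k \<le> s'" "s' \<le> 2 * k" using Suc.prems(2) by (cases s) auto
    have "x (b + s' - 1 + 1) y - hi \<le> \<delta> ^ (m + s') * (x (t + 1) r - hi)"
      using Suc.IH[OF y(1) s(2,3)] b by simp
    from hop_next[OF _ y(2) this] b
    have "x (b + s' - 1 + 2) z - hi \<le> \<delta> * \<delta> ^ (m + s') * (x (t + 1) r - hi)"
      by simp
    then show ?thesis using s b by simp
  next
    case False
    then have s: "s = Suc (Suc (2 * k))" using Suc.prems(3) by simp
    from hop_prev[OF _ y(2) Suc.IH[OF y(1)]] b
    have "x (b + 2 * k + 2) z - hi \<le> \<delta> * \<delta> ^ (m + 2 * k) * (x (t + 1) r - hi)" by simp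
    moreover have "\<delta> ^ (m + s) \<le> \<delta> * \<delta> ^ (m + 2 * k)"
      using s \<delta>_pos \<delta>_le_half by (simp add: power_decreasing mult_left_le_one_le)
    ultimately show ?thesis using anchor_weaken s by fastforce
  qed
qed

lemma root_anchor: "\<exists>P \<le> card E + 1. \<forall>s \<ge> P. x (t + 1 + s) r - hi \<le> \<delta> ^ s * (x (t + 1) r - hi)"
proof (cases "nbrs E r = {}")
  case True
  have "x (t + 1 + s) r - hi \<le> \<delta> ^ s * (x (t + 1) r - hi)" for s
  proof (induction s)
    case (Suc s)
    from hop_self[OF _ root(1) True, of "t + s"] Suc show ?case by (simp add: add.commute)
  qed simp
  then show ?thesis by blast
next
  case False
  then obtain j where "j \<in> nbrs E r" by blast
  then have j: "(j, r) \<in> E" "j \<in> {1..n}" using nbrs_subset[of r] unfolding nbrs_def by blast+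
  obtain m where m: "m \<le> card E" "(r, j) \<in> E ^^ m"
    using rtrancl_relpow_bounded root(2) j(2) by blast
  have cycle: "(r, r) \<in> E ^^ Suc m" using m(2) j(1) by (rule relpow_Suc_I)
  have "x (t + 1 + s) r - hi \<le> \<delta> ^ s * (x (t + 1) r - hi)" if "Suc m \<le> s" for s
    using that
  proof (induction s rule: less_induct)
    case (less s)
    show ?case
    proof (cases "s \<le> 2 * Suc m")
      case True
      then show ?thesis using walk_anchor[of "t + 1" r 0, OF _ _ cycle less.prems] by simp
    next
      case False
      then have split: "s - Suc m + Suc m = s" by simp
      have earlier: "x (t + 1 + (s - Suc m)) r - hi \<le> \<delta> ^ (s - Suc m) * (x (t + 1) r - hi)"
        using less.IH[of "s - Suc m"] False by simp
      have "x (t + 1 + (s - Suc m) + Suc m) r - hi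
          \<le> \<delta> ^ (s - Suc m + Suc m) * (x (t + 1) r - hi)"
        by (rule walk_anchor[OF _ earlier cycle]) simp_all
      then show ?thesis unfolding add.assoc split .
    qed
  qed
  then show ?thesis using m(1) by (intro exI[of _ "Suc m"]) auto
qed

lemma anchored_late:
  assumes "i \<in> {1..n}" "2 * card E + 1 \<le> s"
  shows "x (t + 1 + s) i - hi \<le> \<delta> ^ s * (x (t + 1) r - hi)"
proof -
  obtain P where P: "P \<le> card E + 1" "\<And>s. P \<le> s \<Longrightarrow> x (t + 1 + s) r - hi \<le> \<delta> ^ s * (x (t + 1) r - hi)"
    using root_anchor by blast
  obtain d where d: "d \<le> card E" "(r, i) \<in> E ^^ d"
    using rtrancl_relpow_bounded root(2) assms(1) by blast
  have "P \<le> s - d" using P(1) assms(2) d(1) by linarith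
  then have "x (t + 1 + (s - d)) r - hi \<le> \<delta> ^ (s - d) * (x (t + 1) r - hi)" by (rule P(2))
  from walk_anchor[OF _ this d(2), of d] show ?thesis using assms(2) d(1) by simp
qed

lemma anchored:
  assumes "i \<in> {1..n}"
  shows "x (t + (2 * card E + 2)) i - hi \<le> \<delta> ^ (2 * card E + 2) * (x (t + 1) r - hi)"
    and "x (Suc (t + (2 * card E + 2))) i - hi \<le> \<delta> ^ (2 * card E + 2) * (x (t + 1) r - hi)"
proof -
  have "\<delta> ^ (2 * card E + 2) \<le> \<delta> ^ (2 * card E + 1)"
    using \<delta>_pos \<delta>_le_half by (intro power_decreasing) auto
  then show "x (t + (2 * card E + 2)) i - hi \<le> \<delta> ^ (2 * card E + 2) * (x (t + 1) r - hi)"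
    using anchored_late[OF assms, of "2 * card E + 1"] anchor_weaken by fastforce
  show "x (Suc (t + (2 * card E + 2))) i - hi \<le> \<delta> ^ (2 * card E + 2) * (x (t + 1) r - hi)"
    using anchored_late[OF assms, of "2 * card E + 2"] by simp
qed

end

lemma contraction_rooted:
  assumes f: "f = 0"
  shows "Vmax (t + (2 * card E + 2)) - Vmin (t + (2 * card E + 2))
    \<le> (1 - \<delta> ^ (2 * card E + 2)) * (Vmax t - Vmin t)"
proof -
  interpret mirror: dpmsr_run n f E a \<gamma> T \<alpha> M "\<lambda>k i. - x k i" "\<lambda>k i. - v k i" "\<lambda>k i. - u k i" L U
    by (rule mirror)
  define N \<eta> hi lo where "N = 2 * card E + 2" and "\<eta> = \<delta> ^ N" and "hi = Vmax t" and "lo = Vmin t"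
  obtain r where r: "r \<in> {1..n}" "\<forall>i \<in> {1..n}. (r, i) \<in> E\<^sup>*"
    using robust_one_one_root[OF graph] robust f by auto
  have conf: "confined normal x t lo hi" unfolding hi_def lo_def by (rule confined_Vmin_Vmax)
  then have conf_mirror: "confined normal (\<lambda>k i. - x k i) t (- hi) (- lo)"
    by (simp add: confined_uminus)
  let ?vv = "x (t + 1) r"
  have "(1 - \<eta>) * lo + \<eta> * ?vv \<le> x (t + N) i \<and> x (t + N) i \<le> (1 - \<eta>) * hi + \<eta> * ?vv \<and>
      (1 - \<eta>) * lo + \<eta> * ?vv \<le> x (Suc (t + N)) i \<and> x (Suc (t + N)) i \<le> (1 - \<eta>) * hi + \<eta> * ?vv"
    if "i \<in> normal" for i
    using that anchored[OF f conf r, of i] mirror.anchored[OF f conf_mirror r, of i]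
    unfolding normal_eq_nodes[OF f] N_def \<eta>_def by (simp add: algebra_simps)
  then have "confined normal x (t + N) ((1 - \<eta>) * lo + \<eta> * ?vv) ((1 - \<eta>) * hi + \<eta> * ?vv)"
    unfolding confined_def by blast
  then have "Vmax (t + N) - Vmin (t + N) \<le> (1 - \<eta>) * hi + \<eta> * ?vv - ((1 - \<eta>) * lo + \<eta> * ?vv)"
    using confined_bounds_V by fastforce
  then show ?thesis unfolding N_def \<eta>_def hi_def lo_def by (simp add: algebra_simps)
qed

lemma contraction: "Vmax (t + period) - Vmin (t + period) \<le> rate * (Vmax t - Vmin t)"
proof -
  have spread: "0 \<le> Vmax t - Vmin t" using Vmin_le_Vmax by simp
  have pow: "\<delta> ^ period \<le> \<delta> ^ N" if "N \<le> period" for N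
    using that \<delta>_pos \<delta>_le_half by (intro power_decreasing) auto
  obtain N where N: "N \<le> period"
    and shorter: "Vmax (t + N) - Vmin (t + N) \<le> rate * (Vmax t - Vmin t)"
  proof (cases "f = 0")
    case True
    have "\<delta> ^ period \<le> \<delta> ^ (2 * card E + 2)" by (rule pow) (simp add: period_def)
    moreover have "0 \<le> \<delta> ^ period" using \<delta>_pos by simp
    ultimately have "1 - \<delta> ^ (2 * card E + 2) \<le> rate" unfolding rate_def by linarith
    then show ?thesis
      using that[of "2 * card E + 2"] contraction_rooted[OF True, of t] mult_right_mono[OF _ spread]
      unfolding period_def by fastforce
  next
    case False
    have "\<delta> ^ period \<le> \<delta> ^ Suc n" by (rule pow) (simp add: period_def)
    then have "1 - \<delta> ^ Suc n / 2 \<le> rate" unfolding rate_def by linarith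
    then show ?thesis
      using that[of "Suc n"] contraction_robust[of t] False mult_right_mono[OF _ spread]
      unfolding period_def by fastforce
  qed
  have "Vmax (t + period) - Vmin (t + period) \<le> Vmax (t + N) - Vmin (t + N)"
    using V_monotone[of "t + N" "period - N"] N by simp
  with shorter show ?thesis by linarith
qed

lemma spread_geometric: "Vmax t - Vmin t \<le> 1 / rate * \<rho> ^ Suc t * (Vmax 0 - Vmin 0)"
  unfolding \<rho>_def
proof (rule periodic_contraction_geometric[where D = "\<lambda>t. Vmax t - Vmin t"])
  show "Vmax (t + d) - Vmin (t + d) \<le> Vmax t - Vmin t" for t d using V_monotone[of t d] by linarith
qed (use contraction rate_bounds Vmin_le_Vmax in \<open>auto simp: period_def\<close>)

lemma Vfun_geometric: "1 \<le> k \<Longrightarrow> Vfun normal x k \<le> 1 / rate * \<rho> ^ k * Vfun normal x 1"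
  using spread_geometric[of "k - 1"] Vfun_Suc[of "k - 1"] Vfun_Suc[of 0] by simp

lemma spread_tendsto_zero: "(\<lambda>k. Vmax k - Vmin k) \<longlonglongrightarrow> 0"
proof (rule real_tendsto_sandwich[OF _ _ tendsto_const])
  show "\<forall>\<^sub>F k in sequentially. 0 \<le> Vmax k - Vmin k"
    using Vmin_le_Vmax by (intro always_eventually allI) simp
  show "\<forall>\<^sub>F k in sequentially. Vmax k - Vmin k \<le> 1 / rate * \<rho> ^ Suc k * (Vmax 0 - Vmin 0)"
    using spread_geometric by (intro always_eventually allI) blast
  have "(\<lambda>k. 1 / rate * \<rho> ^ Suc k * (Vmax 0 - Vmin 0)) \<longlonglongrightarrow> 1 / rate * 0 * (Vmax 0 - Vmin 0)"
    using \<rho>_bounds by (intro tendsto_intros LIMSEQ_Suc LIMSEQ_power_zero) simp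
  then show "(\<lambda>k. 1 / rate * \<rho> ^ Suc k * (Vmax 0 - Vmin 0)) \<longlonglongrightarrow> 0" by simp
qed

lemma first_position_le:
  assumes i: "i \<in> normal" shows "x (Suc 0) i \<le> (\<Sum>l \<in> normal. \<bar>x 0 l\<bar>) + T * \<bar>v 0 i\<bar>"
proof -
  define A where "A = (\<Sum>l \<in> normal. \<bar>x 0 l\<bar>)"
  have bound: "\<forall>l \<in> normal. - A \<le> x 0 l \<and> x 0 l \<le> A"
  proof
    fix l assume "l \<in> normal"
    then have "\<bar>x 0 l\<bar> \<le> A" unfolding A_def by (intro member_le_sum) auto
    then show "- A \<le> x 0 l \<and> x 0 l \<le> A" by linarith
  qed
  define S where "S = (\<Sum>j \<in> K 0 i. a i j * (x 0 j - A))"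
  have shift: "coupling 0 i = S - kept_weight 0 i * (x 0 i - A)"
    unfolding S_def by (rule coupling_shift)
  have step: "x (Suc 0) i - A = (1 - T\<^sup>2 / 2 * kept_weight 0 i) * (x 0 i - A)
      + T * (1 - \<alpha> * T / 2) * v 0 i + T\<^sup>2 / 2 * S"
    using position[OF i, of 0]
      unfolding input_eq[OF i, of 0] shift by (simp add: field_simps power2_eq_square)
  have "T\<^sup>2 / 2 * kept_weight 0 i \<le> 1"
    using coupling_gain_le[OF i, of 0] T_sq_le_one by linarith
  then have self: "(1 - T\<^sup>2 / 2 * kept_weight 0 i) * (x 0 i - A) \<le> 0"
    using bound i by (intro mult_nonneg_nonpos) auto
  have "S \<le> 0" unfolding S_def by (rule kept_sum_nonpos[OF i bound])
  then have kept: "T\<^sup>2 / 2 * S \<le> 0" by (simp add: mult_nonneg_nonpos)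
  have "T * (1 - \<alpha> * T / 2) * v 0 i \<le> T * (1 - \<alpha> * T / 2) * \<bar>v 0 i\<bar>"
    using T_pos damping_bounds by (intro mult_left_mono) auto
  also have "\<dots> \<le> T * \<bar>v 0 i\<bar>"
    using T_pos damping_bounds mult_right_mono[of "T * (1 - \<alpha> * T / 2)" T "\<bar>v 0 i\<bar>"] by simp
  finally show ?thesis using step self kept unfolding A_def by linarith
qed

lemma first_position_ge:
  assumes i: "i \<in> normal" shows "- (\<Sum>l \<in> normal. \<bar>x 0 l\<bar>) - T * \<bar>v 0 i\<bar> \<le> x (Suc 0) i"
proof -
  interpret mirror: dpmsr_run n f E a \<gamma> T \<alpha> M "\<lambda>k i. - x k i" "\<lambda>k i. - v k i" "\<lambda>k i. - u k i" L U
    by (rule mirror)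
  show ?thesis using mirror.first_position_le[OF i] by simp
qed

lemma confined_initial:
  defines "B \<equiv> \<Sum>l \<in> normal. \<bar>x 0 l\<bar> + T * \<bar>v 0 l\<bar>"
  shows "confined normal x 0 (- B) B"
  unfolding confined_def
proof
  fix i assume i: "i \<in> normal"
  have "\<bar>x 0 i\<bar> \<le> (\<Sum>l \<in> normal. \<bar>x 0 l\<bar>)" "T * \<bar>v 0 i\<bar> \<le> (\<Sum>l \<in> normal. T * \<bar>v 0 l\<bar>)"
    using i T_pos by (intro member_le_sum; simp)+
  moreover have "B = (\<Sum>l \<in> normal. \<bar>x 0 l\<bar>) + (\<Sum>l \<in> normal. T * \<bar>v 0 l\<bar>)"
    unfolding B_def by (rule sum.distrib)
  moreover have "0 \<le> (\<Sum>l \<in> normal. \<bar>x 0 l\<bar>)" by (simp add: sum_nonneg)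
  moreover have "- \<bar>x 0 i\<bar> \<le> x 0 i" "x 0 i \<le> \<bar>x 0 i\<bar>" "0 \<le> T * \<bar>v 0 i\<bar>"
    using T_pos by simp_all
  ultimately show "- B \<le> x 0 i \<and> x 0 i \<le> B \<and> - B \<le> x (Suc 0) i \<and> x (Suc 0) i \<le> B"
    using first_position_le[OF i] first_position_ge[OF i] by linarith
qed

lemma coupling_le_spread:
  assumes i: "i \<in> normal" shows "\<bar>coupling k i\<bar> \<le> Vmax k - Vmin k"
proof -
  have within: "\<forall>l \<in> normal. Vmin k \<le> x k l \<and> x k l \<le> Vmax k"
    using confined_Vmin_Vmax[of k] unfolding confined_def by blast
  have summand: "\<bar>a i j * (x k j - x k i)\<bar> \<le> a i j * (Vmax k - Vmin k)" if j: "j \<in> K k i" for j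
  proof -
    have "Vmin k \<le> x k i" "x k i \<le> Vmax k" using within i by blast+
    then have "\<bar>x k j - x k i\<bar> \<le> Vmax k - Vmin k"
      using kept_within[OF i j within] by (simp add: abs_le_iff)
    then show ?thesis
      using weight_nonneg kept_subset j by (simp add: abs_mult mult_left_mono subset_iff)
  qed
  have "\<bar>coupling k i\<bar> \<le> (\<Sum>j \<in> K k i. \<bar>a i j * (x k j - x k i)\<bar>)"
    unfolding coupling_def by (rule sum_abs)
  also have "\<dots> \<le> (\<Sum>j \<in> K k i. a i j * (Vmax k - Vmin k))" by (rule sum_mono) (rule summand)
  also have "\<dots> = kept_weight k i * (Vmax k - Vmin k)"
    unfolding kept_weight_def by (rule sum_distrib_right[symmetric])
  also have "\<dots> \<le> Vmax k - Vmin k"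
    using kept_weight_le_one[OF i] Vmin_le_Vmax mult_right_mono[of "kept_weight k i" 1] by simp
  finally show ?thesis .
qed

lemma consensus: "\<exists>c. (\<forall>k. Vmin k \<le> c \<and> c \<le> Vmax k) \<and> (\<forall>i \<in> normal. (\<lambda>k. x k i) \<longlonglongrightarrow> c)"
proof -
  have mono: "\<forall>k. Vmin k \<le> Vmin (Suc k)" "\<forall>k. Vmax (Suc k) \<le> Vmax k" "\<forall>k. Vmin k \<le> Vmax k"
    using V_monotone[where d = 1] Vmin_le_Vmax by simp_all
  have "(\<lambda>k. Vmin k - Vmax k) \<longlonglongrightarrow> 0"
    using tendsto_minus[OF spread_tendsto_zero] by simp
  then obtain c where c: "\<forall>k. Vmin k \<le> c" "Vmin \<longlonglongrightarrow> c" "\<forall>k. c \<le> Vmax k" "Vmax \<longlonglongrightarrow> c"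
    using nested_sequence_unique[OF mono] by blast
  have "(\<lambda>k. x k i) \<longlonglongrightarrow> c" if "i \<in> normal" for i
  proof (rule real_tendsto_sandwich[OF _ _ c(2) c(4)])
    have "Vmin k \<le> x k i \<and> x k i \<le> Vmax k" for k
      using bspec[OF confined_Vmin_Vmax[of k, unfolded confined_def] that] by simp
    then show "\<forall>\<^sub>F k in sequentially. Vmin k \<le> x k i" "\<forall>\<^sub>F k in sequentially. x k i \<le> Vmax k"
      by (simp_all add: always_eventually)
  qed
  then show ?thesis using c by blast
qed

lemma velocity_tendsto_zero:
  assumes i: "i \<in> normal" shows "(\<lambda>k. v k i) \<longlonglongrightarrow> 0"
proof -
  obtain c where c: "(\<lambda>k. x k i) \<longlonglongrightarrow> c" using consensus i by blast
  have "(\<lambda>k. \<bar>coupling k i\<bar>) \<longlonglongrightarrow> 0"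
  proof (rule real_tendsto_sandwich[OF _ _ tendsto_const spread_tendsto_zero])
    show "\<forall>\<^sub>F k in sequentially. 0 \<le> \<bar>coupling k i\<bar>" by simp
    show "\<forall>\<^sub>F k in sequentially. \<bar>coupling k i\<bar> \<le> Vmax k - Vmin k"
      using coupling_le_spread[OF i] by (simp add: always_eventually)
  qed
  then have coupling: "(\<lambda>k. coupling k i) \<longlonglongrightarrow> 0" by (rule tendsto_rabs_zero_cancel)
  have "(\<lambda>k. x (Suc k) i - x k i - T\<^sup>2 / 2 * coupling k i) \<longlonglongrightarrow> c - c - T\<^sup>2 / 2 * 0"
    using tendsto_diff[OF tendsto_diff[OF LIMSEQ_Suc[OF c] c]
        tendsto_mult[OF tendsto_const coupling]] .
  then have "(\<lambda>k. (x (Suc k) i - x k i - T\<^sup>2 / 2 * coupling k i) / (T * (1 - \<alpha> * T / 2)))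
      \<longlonglongrightarrow> (c - c - T\<^sup>2 / 2 * 0) / (T * (1 - \<alpha> * T / 2))"
    using T_pos damping_bounds by (intro tendsto_divide tendsto_const) simp_all
  moreover have "v k i = (x (Suc k) i - x k i - T\<^sup>2 / 2 * coupling k i) / (T * (1 - \<alpha> * T / 2))"
    for k
  proof -
    have "x (Suc k) i - x k i - T\<^sup>2 / 2 * coupling k i = T * (1 - \<alpha> * T / 2) * v k i"
      using position[OF i, of k]
        unfolding input_eq[OF i, of k] by (simp add: algebra_simps power2_eq_square)
    then show ?thesis using T_pos damping_bounds by simp
  qed
  ultimately show ?thesis by simp
qed

lemma resilient_consensus:
  defines "B \<equiv> \<Sum>i \<in> normal. \<bar>x 0 i\<bar> + T * \<bar>v 0 i\<bar>"
  shows "(\<forall>k. \<forall>i \<in> normal. - B \<le> x k i \<and> x k i \<le> B) \<and>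
    (\<exists>c. - B \<le> c \<and> c \<le> B \<and> (\<forall>i \<in> normal. (\<lambda>k. x k i) \<longlonglongrightarrow> c \<and> (\<lambda>k. v k i) \<longlonglongrightarrow> 0))"
proof -
  have conf: "confined normal x k (- B) B" for k
    using confined_later[OF confined_initial[folded B_def]] by simp
  obtain c where c: "\<forall>k. Vmin k \<le> c \<and> c \<le> Vmax k" "\<forall>i \<in> normal. (\<lambda>k. x k i) \<longlonglongrightarrow> c"
    using consensus by blast
  have "- B \<le> c" "c \<le> B" using c(1) confined_bounds_V[OF conf[of 0]] by (meson order_trans)+
  then show ?thesis using conf c(2) velocity_tendsto_zero unfolding confined_def by blast
qed

end

context dpmsr_params
begin

lemma dpmsr_run_of_traj:
  assumes "M \<subseteq> {1..n}" "card M \<le> f" "dpmsr_traj n E a f T \<alpha> M x v u"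
  obtains U L where "dpmsr_run n f E a \<gamma> T \<alpha> M x v u U L"
proof -
  let ?law = "\<lambda>k i p. upper_removed f (nbrs E i) (\<lambda>j. x k j - x k i) (fst p) \<and>
      lower_removed f (nbrs E i) (\<lambda>j. x k j - x k i) (snd p) \<and>
      u k i = - (\<Sum>j \<in> nbrs E i - (fst p \<union> snd p). a i j * (x k i - x k j)) - \<alpha> * v k i"
  have law_exists: "\<exists>p. ?law k i p" if i: "i \<in> {1..n} - M" for k i
  proof -
    obtain U L where "?law k i (U, L)"
      using bspec[OF spec[OF conjunct2[OF assms(3)[unfolded dpmsr_traj_def]], of k] i] by auto
    then show ?thesis by (rule exI)
  qed
  define p where "p k i = (SOME p. ?law k i p)" for k i
  have p: "?law k i (p k i)" if "i \<in> {1..n} - M" for k i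
    unfolding p_def by (rule someI_ex) (rule law_exists[OF that])
  show thesis
  proof (rule that, intro dpmsr_run.intro dpmsr_params_axioms dpmsr_run_axioms.intro assms(1,2))
    fix k i assume i: "i \<in> {1..n} - M"
    show "x (Suc k) i = x k i + T * v k i + T\<^sup>2 / 2 * u k i" "v (Suc k) i = v k i + T * u k i"
      using assms(3) i unfolding dpmsr_traj_def by blast+
    show "upper_removed f (nbrs E i) (\<lambda>j. x k j - x k i) (fst (p k i))"
      "lower_removed f (nbrs E i) (\<lambda>j. x k j - x k i) (snd (p k i))"
      "u k i = - (\<Sum>j \<in> kept E (\<lambda>k i. fst (p k i)) (\<lambda>k i. snd (p k i)) k i. a i j * (x k i - x k j))
        - \<alpha> * v k i"
      using p[OF i] unfolding kept_def by simp_all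
  qed
qed

lemma consensus_of_traj:
  assumes "M \<subseteq> {1..n}" "card M \<le> f" "dpmsr_traj n E a f T \<alpha> M x v u"
  defines "B \<equiv> \<Sum>i \<in> {1..n} - M. \<bar>x 0 i\<bar> + T * \<bar>v 0 i\<bar>"
  shows "(\<forall>k. \<forall>i \<in> {1..n} - M. - B \<le> x k i \<and> x k i \<le> B) \<and>
    (\<exists>c. - B \<le> c \<and> c \<le> B \<and> (\<forall>i \<in> {1..n} - M. (\<lambda>k. x k i) \<longlonglongrightarrow> c \<and> (\<lambda>k. v k i) \<longlonglongrightarrow> 0))"
proof -
  obtain U L where "dpmsr_run n f E a \<gamma> T \<alpha> M x v u U L"
    using assms(1-3) by (rule dpmsr_run_of_traj)
  then interpret dpmsr_run n f E a \<gamma> T \<alpha> M x v u U L .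
  show ?thesis unfolding B_def by (rule resilient_consensus)
qed

lemma geometric_of_traj:
  assumes "M \<subseteq> {1..n}" "card M \<le> f" "dpmsr_traj n E a f T \<alpha> M x v u" "1 \<le> k"
  shows "Vfun ({1..n} - M) x k \<le> 1 / rate * \<rho> ^ k * Vfun ({1..n} - M) x 1"
proof -
  obtain U L where "dpmsr_run n f E a \<gamma> T \<alpha> M x v u U L"
    using assms(1-3) by (rule dpmsr_run_of_traj)
  then interpret dpmsr_run n f E a \<gamma> T \<alpha> M x v u U L .
  show ?thesis using Vfun_geometric assms(4) .
qed

end

theorem corollary1:
  fixes n f :: nat and E :: "(nat \<times> nat) set" and a :: "nat \<Rightarrow> nat \<Rightarrow> real"
    and \<gamma> T \<alpha> :: real
  assumes "digraph n E"
    and "admissible_weights n E \<gamma> a"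
    and "robust n E (f + 1) (f + 1)"
    and "0 < T"
    and "1 + T\<^sup>2 / 2 \<le> \<alpha> * T" and "\<alpha> * T \<le> 2 - T\<^sup>2 / 2"
  shows
    "(\<exists>Lo Up :: nat set \<Rightarrow> (nat \<Rightarrow> real) \<Rightarrow> (nat \<Rightarrow> real) \<Rightarrow> real.
        (\<forall>M x0 v0 x0' v0'. (\<forall>i \<in> {1..n} - M. x0 i = x0' i \<and> v0 i = v0' i) \<longrightarrow>
             Lo M x0 v0 = Lo M x0' v0' \<and> Up M x0 v0 = Up M x0' v0') \<and>
        (\<forall>M x v u. M \<subseteq> {1..n} \<longrightarrow> card M \<le> f \<longrightarrow> dpmsr_traj n E a f T \<alpha> M x v u \<longrightarrow>
             (\<forall>k. \<forall>i \<in> {1..n} - M. Lo M (x 0) (v 0) \<le> x k i \<and> x k i \<le> Up M (x 0) (v 0)) \<and>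
             (\<exists>c. Lo M (x 0) (v 0) \<le> c \<and> c \<le> Up M (x 0) (v 0) \<and>
                  (\<forall>i \<in> {1..n} - M. (\<lambda>k. x k i) \<longlonglongrightarrow> c \<and> (\<lambda>k. v k i) \<longlonglongrightarrow> 0)))) \<and>
     (\<exists>C \<rho> :: real. 0 < C \<and> 0 < \<rho> \<and> \<rho> < 1 \<and>
        (\<forall>M x v u. M \<subseteq> {1..n} \<longrightarrow> card M \<le> f \<longrightarrow> dpmsr_traj n E a f T \<alpha> M x v u \<longrightarrow>
             (\<forall>k \<ge> 1. Vfun ({1..n} - M) x k \<le> C * \<rho> ^ k * Vfun ({1..n} - M) x 1)))"
proof -
  interpret dpmsr_params n f E a \<gamma> T \<alpha> using assms by unfold_locales
  let ?B = "\<lambda>M x0 v0. \<Sum>i \<in> {1..n} - M. \<bar>x0 i\<bar> + T * \<bar>v0 i\<bar>"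
  show ?thesis
    by (rule conjI[OF exI[of _ "\<lambda>M x0 v0. - ?B M x0 v0", OF exI[of _ ?B]]
          exI[of _ "1 / rate", OF exI[of _ \<rho>]]])
      (use consensus_of_traj geometric_of_traj rate_bounds \<rho>_bounds in \<open>auto intro!: sum.cong\<close>)
qed

end
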